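(* Consider D-SGD under Assumptions 1 and 3 with a constant step size $\gamma>0$ and constant mixing parameter $p\in(0,1]$, with all nodes initialized at the same point (so $\Xi_0=0$). Let $a_t:=\mathbb{E}[\Xi_t^2]$ and $b_t:=\mathbb{E}[\phi_t^2]$, where $\phi_t^2:=\frac1n\sum_{i=1}^n\|\nabla f_i(x_i^{(t)})\|_2^2$. (i) If $b_t\le\phi^2$ for all $t$ for some constant $\phi\ge 0$, then for all $t\ge0$, $a_t\le 6(1-p)\gamma^2\big(\frac{\phi^2}{p^2}+\frac{\sigma^2}{p}\big)$. (ii) If $b_t\le(1+p/4)\,b_{t+1}$ for all $t\ge0$, then for all $t\ge1$, $a_t\le 12(1-p)\gamma^2\big(\frac{b_{t-1}}{p^2}+\frac{\sigma^2}{p}\big)$. In particular $\Xi_t^2 = (1-p)\gamma^2\cdot\mathcal{O}\big(\frac{\phi^2}{p^2}+\frac{\sigma^2}{p}\big)$ in expectation.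
   Context: Problem: $f(x):=\frac1n\sum_{i=1}^n f_i(x)$, $f_i(x):=\mathbb{E}_{\xi\sim\mathcal{D}_i}[F_i(x,\xi)]$, with $\nabla F_i(x,\xi)$ an unbiased stochastic gradient of $f_i$. D-SGD: $x_i^{(t+1)}=\sum_{j=1}^n w^{(t)}_{ij}\big(x_j^{(t)}-\gamma\nabla F_j(x_j^{(t)},\xi_j^{(t)})\big)$ with $\xi_j^{(t)}\sim\mathcal{D}_j$ independent and mixing matrices $W^{(t)}$ sampled independently of everything else. Notation: $\bar{x}:=\frac1n\sum_i x_i$, $\bar X:=X\frac1n\mathbf{1}\mathbf{1}^\top$ for $X=[x_1,\dots,x_n]$, consensus distance $\Xi_t^2:=\frac1n\sum_{i}\|\bar x^{(t)}-x_i^{(t)}\|_2^2$. Assumption 1: every sample of $W$ is doubly stochastic and there is $p\in(0,1]$ with $\mathbb{E}_W\|XW-\bar X\|_F^2\le(1-p)\|X-\bar X\|_F^2$ for all $X\in\mathbb{R}^{d\times n}$. Assumption 3: for all $x_1,\dots,x_n$, $\frac1n\sum_i\mathbb{E}_{\xi_i}\|\nabla F_i(x_i,\xi_i)-\nabla f_i(x_i)\|_2^2\le\sigma^2$. *)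

theory Defs
  imports "HOL-Analysis.Analysis" "HOL-Probability.Probability"
begin

text \<open>Nodes are indexed by a finite type 'n (n = CARD('n)); parameters live in real^'d.
A state is X = [x_1,...,x_n], represented as (real^'d)^'n with X $ i = x_i.
A mixing matrix is W :: real^'n^'n with W $ i $ j = w_ij.\<close>

definition doubly_stochastic :: "real^'n^'n \<Rightarrow> bool" where
  "doubly_stochastic W \<longleftrightarrow> (\<forall>i j. 0 \<le> W $ i $ j) \<and>
     (\<forall>i. (\<Sum>j\<in>UNIV. W $ i $ j) = 1) \<and> (\<forall>j. (\<Sum>i\<in>UNIV. W $ i $ j) = 1)"

definition mix :: "real^'n^'n \<Rightarrow> (real^'d)^'n \<Rightarrow> (real^'d)^'n" where
  "mix W Y = (\<chi> i. \<Sum>j\<in>UNIV. W $ i $ j *\<^sub>R Y $ j)"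

definition avg :: "(real^'d)^('n::finite) \<Rightarrow> real^'d" where
  "avg X = (1 / real CARD('n)) *\<^sub>R (\<Sum>i\<in>UNIV. X $ i)"

definition dev_sq :: "(real^'d)^('n::finite) \<Rightarrow> real" where
  "dev_sq X = (\<Sum>i\<in>UNIV. (norm (avg X - X $ i))\<^sup>2)"

definition consensus_sq :: "(real^'d)^('n::finite) \<Rightarrow> real" where
  "consensus_sq X = (1 / real CARD('n)) * (\<Sum>i\<in>UNIV. (norm (avg X - X $ i))\<^sup>2)"

definition grad_sq :: "('n \<Rightarrow> real^'d \<Rightarrow> real^'d) \<Rightarrow> (real^'d)^('n::finite) \<Rightarrow> real" where
  "grad_sq gf X = (1 / real CARD('n)) * (\<Sum>i\<in>UNIV. (norm (gf i (X $ i)))\<^sup>2)"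

definition dsgd_step :: "('n::finite \<Rightarrow> 'b measure) \<Rightarrow> (real^'n^'n) measure \<Rightarrow>
    ('n \<Rightarrow> real^'d \<Rightarrow> 'b \<Rightarrow> real^'d) \<Rightarrow> real \<Rightarrow> (real^'d)^'n \<Rightarrow> ((real^'d)^'n) measure" where
  "dsgd_step D WD gF \<gamma> X =
     PiM UNIV D \<bind> (\<lambda>\<xi>. WD \<bind> (\<lambda>W.
        return borel (mix W (\<chi> j. X $ j - \<gamma> *\<^sub>R gF j (X $ j) (\<xi> j)))))"

definition dsgd_law :: "('n::finite \<Rightarrow> 'b measure) \<Rightarrow> (real^'n^'n) measure \<Rightarrow>
    ('n \<Rightarrow> real^'d \<Rightarrow> 'b \<Rightarrow> real^'d) \<Rightarrow> real \<Rightarrow> real^'d \<Rightarrow> nat \<Rightarrow> ((real^'d)^'n) measure" where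
  "dsgd_law D WD gF \<gamma> x0 t =
     ((\<lambda>\<mu>. \<mu> \<bind> dsgd_step D WD gF \<gamma>) ^^ t) (return borel (\<chi> i. x0))"

end

theory Submission imports Defs begin

text \<open>Gossip averaging contracts the expected squared distance to the mean by the factor 1 - p
and preserves the mean, so only the local stochastic-gradient step can move the nodes apart. That
step splits into a drift (the centred true gradients) and a zero-mean noise whose second moment,
at most n \<sigma>^2, simply adds. Young's inequality with weight p/2 on the drift gives the
recursion a(t+1) \<le> (1 - p/2) a(t) + 3 (1 - p)/p \<gamma>^2 b(t) + (1 - p) \<gamma>^2 \<sigma>^2 with a(0) = 0.
A uniform bound on b(t) is then propagated to the fixed point of this recursion, and the
slow-decay hypothesis b(t) \<le> (1 + p/4) b(t+1) lets an induction keep a(t+1) below a fixed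
multiple of b(t) plus a constant.\<close>

lemma measurable_vec_lambda[measurable (raw)]:
  fixes f :: "'a \<Rightarrow> 'i::finite \<Rightarrow> 'b::euclidean_space"
  assumes "\<And>i. (\<lambda>x. f x i) \<in> borel_measurable M"
  shows "(\<lambda>x. \<chi> i. f x i) \<in> borel_measurable M"
  unfolding borel_measurable_euclidean_space[where 'c="'b^'i"]
proof
  fix b :: "'b^'i" assume "b \<in> Basis"
  then obtain i u where b: "b = axis i u" "u \<in> Basis" unfolding Basis_vec_def by auto
  have "(\<lambda>x. f x i \<bullet> u) \<in> borel_measurable M" using assms[of i] by measurable
  then show "(\<lambda>x. (\<chi> i. f x i) \<bullet> b) \<in> borel_measurable M" using b by (simp add: inner_axis)
qed

lemma measurable_vec_nth[measurable (raw)]: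
  fixes f :: "'a \<Rightarrow> 'b::euclidean_space^'i::finite"
  assumes "f \<in> borel_measurable M"
  shows "(\<lambda>x. f x $ i) \<in> borel_measurable M"
proof -
  have "(\<lambda>x. x $ i) \<in> borel_measurable (borel :: ('b^'i) measure)"
    by (intro borel_measurable_continuous_onI continuous_intros)
  from measurable_compose[OF assms this] show ?thesis .
qed

lemma measurable_mix[measurable (raw)]:
  fixes W :: "'a \<Rightarrow> real^'n::finite^'n" and Y :: "'a \<Rightarrow> (real^'d)^'n"
  assumes "W \<in> borel_measurable M" "Y \<in> borel_measurable M"
  shows "(\<lambda>x. mix (W x) (Y x)) \<in> borel_measurable M"
  unfolding mix_def using assms by measurable

lemma borel_measurable_consensus_sq[measurable]:
  "consensus_sq \<in> borel_measurable (borel :: ((real^'d)^'n::finite) measure)"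
  unfolding consensus_sq_def avg_def by measurable

subsection \<open>Sums of squares around the mean\<close>

definition mean :: "('n::finite \<Rightarrow> 'a::real_vector) \<Rightarrow> 'a" where
  "mean v = (1 / real CARD('n)) *\<^sub>R (\<Sum>j\<in>UNIV. v j)"

lemma avg_eq_mean: "avg X = mean (vec_nth X)"
  by (simp add: avg_def mean_def)

lemma power2_norm_add:
  fixes x y :: "'a::real_inner"
  shows "(norm (x + y))\<^sup>2 = (norm x)\<^sup>2 + 2 * (x \<bullet> y) + (norm y)\<^sup>2"
  using dot_norm[of x y] by (simp add: field_simps)

lemma power2_norm_diff:
  fixes x y :: "'a::real_inner"
  shows "(norm (x - y))\<^sup>2 = (norm x)\<^sup>2 - 2 * (x \<bullet> y) + (norm y)\<^sup>2"
  using dot_norm_neg[of x y] by (simp add: field_simps)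

lemma sum_power2_norm_diff_mean_le:
  fixes v :: "'n::finite \<Rightarrow> 'a::real_inner"
  shows "(\<Sum>i\<in>UNIV. (norm (v i - mean v))\<^sup>2) \<le> (\<Sum>i\<in>UNIV. (norm (v i - c))\<^sup>2)"
proof -
  have centred: "(\<Sum>i\<in>UNIV. v i - mean v) = 0"
    by (simp add: sum_subtractf mean_def sum_constant_scaleR)
  have "(norm (v i - c))\<^sup>2 = (norm (v i - mean v))\<^sup>2 + 2 * ((v i - mean v) \<bullet> (mean v - c))
      + (norm (mean v - c))\<^sup>2" for i
    using power2_norm_add[of "v i - mean v" "mean v - c"] by simp
  then have "(\<Sum>i\<in>UNIV. (norm (v i - c))\<^sup>2)
      = (\<Sum>i\<in>UNIV. (norm (v i - mean v))\<^sup>2 + 2 * ((v i - mean v) \<bullet> (mean v - c)) + (norm (mean v - c))\<^sup>2)"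
    by simp
  also have "\<dots> = (\<Sum>i\<in>UNIV. (norm (v i - mean v))\<^sup>2) + 2 * ((\<Sum>i\<in>UNIV. v i - mean v) \<bullet> (mean v - c))
      + (\<Sum>i::'n\<in>UNIV. (norm (mean v - c))\<^sup>2)"
    by (simp add: sum.distrib sum_distrib_left inner_sum_left)
  finally show ?thesis unfolding centred by (simp add: sum_nonneg)
qed

lemma power2_norm_diff_le_Young:
  fixes x y :: "'a::real_inner"
  assumes "0 < \<epsilon>"
  shows "(norm (x - y))\<^sup>2 \<le> (1 + \<epsilon>) * (norm x)\<^sup>2 + (1 + 1 / \<epsilon>) * (norm y)\<^sup>2"
proof -
  have "0 \<le> (norm (\<epsilon> *\<^sub>R x + y))\<^sup>2" by simp
  also have "\<dots> = \<epsilon>\<^sup>2 * (norm x)\<^sup>2 + 2 * \<epsilon> * (x \<bullet> y) + (norm y)\<^sup>2"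
    by (simp add: power2_norm_add power_mult_distrib)
  also have "\<dots> = \<epsilon> * (\<epsilon> * (norm x)\<^sup>2 + 2 * (x \<bullet> y) + (norm y)\<^sup>2 / \<epsilon>)"
    using assms by (simp add: algebra_simps power2_eq_square)
  finally have "- 2 * (x \<bullet> y) \<le> \<epsilon> * (norm x)\<^sup>2 + (norm y)\<^sup>2 / \<epsilon>"
    using assms by (simp add: zero_le_mult_iff)
  then show ?thesis by (simp add: power2_norm_diff algebra_simps)
qed

lemma sum_power2_norm_centred_drift_le:
  fixes x g :: "'n::finite \<Rightarrow> 'a::real_inner"
  assumes "0 < \<epsilon>"
  shows "(\<Sum>i\<in>UNIV. (norm ((x i - mean x) - \<gamma> *\<^sub>R (g i - mean g)))\<^sup>2)
    \<le> (1 + \<epsilon>) * (\<Sum>i\<in>UNIV. (norm (x i - mean x))\<^sup>2) + (1 + 1 / \<epsilon>) * \<gamma>\<^sup>2 * (\<Sum>i\<in>UNIV. (norm (g i))\<^sup>2)"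
proof -
  have "(\<Sum>i\<in>UNIV. (norm ((x i - mean x) - \<gamma> *\<^sub>R (g i - mean g)))\<^sup>2)
      \<le> (\<Sum>i\<in>UNIV. (1 + \<epsilon>) * (norm (x i - mean x))\<^sup>2 + (1 + 1 / \<epsilon>) * \<gamma>\<^sup>2 * (norm (g i - mean g))\<^sup>2)"
  proof (intro sum_mono)
    fix i
    show "(norm ((x i - mean x) - \<gamma> *\<^sub>R (g i - mean g)))\<^sup>2
        \<le> (1 + \<epsilon>) * (norm (x i - mean x))\<^sup>2 + (1 + 1 / \<epsilon>) * \<gamma>\<^sup>2 * (norm (g i - mean g))\<^sup>2"
      using power2_norm_diff_le_Young[OF assms, of "x i - mean x" "\<gamma> *\<^sub>R (g i - mean g)"]
      by (simp add: power_mult_distrib mult.assoc)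
  qed
  also have "\<dots> = (1 + \<epsilon>) * (\<Sum>i\<in>UNIV. (norm (x i - mean x))\<^sup>2)
      + (1 + 1 / \<epsilon>) * \<gamma>\<^sup>2 * (\<Sum>i\<in>UNIV. (norm (g i - mean g))\<^sup>2)"
    by (simp add: sum.distrib sum_distrib_left)
  also have "\<dots> \<le> (1 + \<epsilon>) * (\<Sum>i\<in>UNIV. (norm (x i - mean x))\<^sup>2) + (1 + 1 / \<epsilon>) * \<gamma>\<^sup>2 * (\<Sum>i\<in>UNIV. (norm (g i))\<^sup>2)"
    using assms sum_power2_norm_diff_mean_le[of g 0] by (intro add_left_mono mult_left_mono) auto
  finally show ?thesis .
qed

lemma avg_mix_doubly_stochastic:
  fixes W :: "real^'n^'n::finite" and Y :: "(real^'d)^'n"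
  assumes "doubly_stochastic W"
  shows "avg (mix W Y) = avg Y"
proof -
  have "(\<Sum>i\<in>UNIV. mix W Y $ i) = (\<Sum>j\<in>UNIV. (\<Sum>i\<in>UNIV. W $ i $ j) *\<^sub>R Y $ j)"
    unfolding mix_def by (simp add: scaleR_sum_left) (rule sum.swap)
  also have "\<dots> = (\<Sum>j\<in>UNIV. Y $ j)" using assms by (simp add: doubly_stochastic_def)
  finally show ?thesis by (simp add: avg_def)
qed

lemma nn_integral_power2_norm_diff_zero_mean:
  fixes M :: "'b measure" and g :: "'b \<Rightarrow> 'a::euclidean_space"
  assumes "prob_space M" and g_int: "integrable M g" and g_mean: "integral\<^sup>L M g = h"
    and second_moment: "(\<integral>\<^sup>+\<zeta>. ennreal ((norm (g \<zeta> - h))\<^sup>2) \<partial>M) < \<infinity>"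
  shows "(\<integral>\<^sup>+\<zeta>. ennreal ((norm (u - \<gamma> *\<^sub>R (g \<zeta> - h)))\<^sup>2) \<partial>M)
       = ennreal ((norm u)\<^sup>2) + ennreal (\<gamma>\<^sup>2) * (\<integral>\<^sup>+\<zeta>. ennreal ((norm (g \<zeta> - h))\<^sup>2) \<partial>M)"
proof -
  interpret prob_space M by fact
  have [measurable]: "g \<in> borel_measurable M" using g_int by (rule borel_measurable_integrable)
  define e where "e \<zeta> = g \<zeta> - h" for \<zeta>
  have e_int: "integrable M e" unfolding e_def using g_int by simp
  have e_mean: "integral\<^sup>L M e = 0" unfolding e_def using g_int g_mean by (simp add: prob_space)
  have e2_int: "integrable M (\<lambda>\<zeta>. (norm (e \<zeta>))\<^sup>2)"
    using second_moment by (intro integrableI_nonneg) (auto simp: e_def)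
  have expand: "(norm (u - \<gamma> *\<^sub>R e \<zeta>))\<^sup>2 = (norm u)\<^sup>2 - 2 * \<gamma> * (u \<bullet> e \<zeta>) + \<gamma>\<^sup>2 * (norm (e \<zeta>))\<^sup>2" for \<zeta>
    by (simp add: power2_norm_diff power_mult_distrib)
  have "integrable M (\<lambda>\<zeta>. (norm (u - \<gamma> *\<^sub>R e \<zeta>))\<^sup>2)"
    unfolding expand using e_int e2_int by auto
  then have "(\<integral>\<^sup>+\<zeta>. ennreal ((norm (u - \<gamma> *\<^sub>R e \<zeta>))\<^sup>2) \<partial>M) = ennreal (\<integral>\<zeta>. (norm (u - \<gamma> *\<^sub>R e \<zeta>))\<^sup>2 \<partial>M)"
    by (intro nn_integral_eq_integral) auto
  also have "(\<integral>\<zeta>. (norm (u - \<gamma> *\<^sub>R e \<zeta>))\<^sup>2 \<partial>M) = (norm u)\<^sup>2 + \<gamma>\<^sup>2 * (\<integral>\<zeta>. (norm (e \<zeta>))\<^sup>2 \<partial>M)"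
    using e_int e2_int e_mean unfolding expand by (simp add: prob_space)
  also have "ennreal \<dots> = ennreal ((norm u)\<^sup>2) + ennreal (\<gamma>\<^sup>2) * ennreal (\<integral>\<zeta>. (norm (e \<zeta>))\<^sup>2 \<partial>M)"
    by (simp add: ennreal_mult integral_nonneg_AE)
  also have "ennreal (\<integral>\<zeta>. (norm (e \<zeta>))\<^sup>2 \<partial>M) = (\<integral>\<^sup>+\<zeta>. ennreal ((norm (e \<zeta>))\<^sup>2) \<partial>M)"
    using e2_int by (simp add: nn_integral_eq_integral)
  finally show ?thesis unfolding e_def .
qed

subsection \<open>One step of D-SGD\<close>

definition local_update ::
    "('n::finite \<Rightarrow> real^'d \<Rightarrow> 'b \<Rightarrow> real^'d) \<Rightarrow> real \<Rightarrow> (real^'d)^'n \<Rightarrow> ('n \<Rightarrow> 'b) \<Rightarrow> (real^'d)^'n" where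
  "local_update gF \<gamma> X \<xi> = (\<chi> j. X $ j - \<gamma> *\<^sub>R gF j (X $ j) (\<xi> j))"

lemma dsgd_step_local_update:
  "dsgd_step D WD gF \<gamma> X = PiM UNIV D \<bind> (\<lambda>\<xi>. WD \<bind> (\<lambda>W. return borel (mix W (local_update gF \<gamma> X \<xi>))))"
  unfolding dsgd_step_def local_update_def ..

lemma dsgd_law_Suc:
  "dsgd_law D WD gF \<gamma> x0 (Suc t) = dsgd_law D WD gF \<gamma> x0 t \<bind> dsgd_step D WD gF \<gamma>"
  by (simp add: dsgd_law_def)

lemma dev_sq_local_update_le:
  "dev_sq (local_update gF \<gamma> X \<xi>)
    \<le> (\<Sum>i\<in>UNIV. (norm ((X $ i - avg X) - \<gamma> *\<^sub>R (g i - mean g) - \<gamma> *\<^sub>R (gF i (X $ i) (\<xi> i) - g i)))\<^sup>2)"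
proof -
  let ?Y = "local_update gF \<gamma> X \<xi>"
  have "dev_sq ?Y = (\<Sum>i\<in>UNIV. (norm (?Y $ i - mean (vec_nth ?Y)))\<^sup>2)"
    unfolding dev_sq_def avg_eq_mean by (simp add: norm_minus_commute)
  also have "\<dots> \<le> (\<Sum>i\<in>UNIV. (norm (?Y $ i - (avg X - \<gamma> *\<^sub>R mean g)))\<^sup>2)"
    by (rule sum_power2_norm_diff_mean_le)
  also have "\<dots> = (\<Sum>i\<in>UNIV. (norm ((X $ i - avg X) - \<gamma> *\<^sub>R (g i - mean g) - \<gamma> *\<^sub>R (gF i (X $ i) (\<xi> i) - g i)))\<^sup>2)"
    by (simp add: local_update_def algebra_simps)
  finally show ?thesis .
qed

lemma nn_integral_consensus_dsgd_law_0:
  fixes D :: "'n::finite \<Rightarrow> 'b measure" and gF :: "'n \<Rightarrow> real^'d \<Rightarrow> 'b \<Rightarrow> real^'d"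
  shows "(\<integral>\<^sup>+X. ennreal (consensus_sq X) \<partial>dsgd_law D WD gF \<gamma> x0 0) = 0"
proof -
  have "avg (\<chi> i. x0 :: (real^'d)^'n) = x0"
    unfolding avg_def by (simp add: sum_constant_scaleR del: sum_constant)
  then show ?thesis
    unfolding dsgd_law_def funpow_0
    by (subst nn_integral_return[OF _ measurable_compose[OF borel_measurable_consensus_sq measurable_ennreal]])
      (auto simp: consensus_sq_def)
qed

lemma ennreal_affine_combination:
  fixes \<alpha> x \<beta> y C :: real
  assumes "0 \<le> \<alpha>" "0 \<le> x" "0 \<le> \<beta>" "0 \<le> y" "0 \<le> C"
  shows "ennreal (\<alpha> * x + \<beta> * y + C) = ennreal \<alpha> * ennreal x + ennreal \<beta> * ennreal y + ennreal C"
  using assms by (simp add: ennreal_mult)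

locale dsgd =
  fixes D :: "'n::finite \<Rightarrow> 'b measure" and WD :: "(real^'n^'n) measure"
    and gF :: "'n \<Rightarrow> real^'d \<Rightarrow> 'b \<Rightarrow> real^'d" and gf :: "'n \<Rightarrow> real^'d \<Rightarrow> real^'d"
    and p \<sigma> :: real
  assumes D_prob: "\<And>i. prob_space (D i)"
    and gF_meas: "\<And>i. (\<lambda>(x, \<xi>). gF i x \<xi>) \<in> borel_measurable (borel \<Otimes>\<^sub>M D i)"
    and unbiased: "\<And>i x. integrable (D i) (gF i x) \<and> (\<integral>\<xi>. gF i x \<xi> \<partial>D i) = gf i x"
    and WD_prob: "prob_space WD"
    and WD_sets: "sets WD = sets borel"
    and doubly_stochastic: "AE W in WD. doubly_stochastic W"
    and p_range: "0 < p" "p \<le> 1"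
    and mixing: "\<And>X :: (real^'d)^'n.
        (\<integral>\<^sup>+ W. ennreal (\<Sum>i\<in>UNIV. (norm (mix W X $ i - avg X))\<^sup>2) \<partial>WD) \<le> ennreal ((1 - p) * dev_sq X)"
    and variance: "\<And>X :: (real^'d)^'n.
        ennreal (1 / real CARD('n)) *
          (\<Sum>i\<in>UNIV. \<integral>\<^sup>+ \<xi>. ennreal ((norm (gF i (X $ i) \<xi> - gf i (X $ i)))\<^sup>2) \<partial>D i)
          \<le> ennreal (\<sigma>\<^sup>2)"
begin

lemma borel_measurable_gf[measurable]: "gf i \<in> borel_measurable borel"
proof -
  interpret prob_space "D i" by (rule D_prob)
  have "(\<lambda>x. \<integral>\<xi>. gF i x \<xi> \<partial>D i) \<in> borel_measurable borel"
    by (rule borel_measurable_lebesgue_integral) (rule gF_meas)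
  then show ?thesis using unbiased by simp
qed

lemma borel_measurable_gF[measurable]: "gF i x \<in> borel_measurable (D i)"
  using unbiased[of i x] by (simp add: borel_measurable_integrable)

lemma measurable_local_update:
  "(\<lambda>(X, \<xi>). local_update gF \<gamma> X \<xi>) \<in> borel_measurable (borel \<Otimes>\<^sub>M PiM UNIV D)"
proof -
  have "(\<lambda>(X::(real^'d)^'n, \<xi>). gF j (X $ j) (\<xi> j)) \<in> borel_measurable (borel \<Otimes>\<^sub>M PiM UNIV D)" for j
  proof -
    have "(\<lambda>(X::(real^'d)^'n, \<xi>). (X $ j, \<xi> j)) \<in> (borel \<Otimes>\<^sub>M PiM UNIV D) \<rightarrow>\<^sub>M (borel \<Otimes>\<^sub>M D j)"
      by measurable
    from measurable_compose[OF this gF_meas[of j]] show ?thesis by (simp add: case_prod_beta')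
  qed
  then show ?thesis unfolding local_update_def by (simp add: case_prod_beta') measurable
qed

lemma measurable_mixing_kernel:
  assumes "Y \<in> borel_measurable M"
  shows "(\<lambda>z. WD \<bind> (\<lambda>W. return borel (mix W (Y z)))) \<in> M \<rightarrow>\<^sub>M prob_algebra borel"
proof -
  have WD_space: "WD \<in> space (prob_algebra borel)"
    using WD_prob WD_sets by (auto simp: space_prob_algebra)
  have "(\<lambda>(z, W :: real^'n^'n). mix W (Y z)) \<in> borel_measurable (M \<Otimes>\<^sub>M borel)"
    using assms by measurable
  then have "(\<lambda>(z, W). return borel (mix W (Y z))) \<in> M \<Otimes>\<^sub>M borel \<rightarrow>\<^sub>M prob_algebra borel"
    by (simp add: measurable_compose[OF _ measurable_return_prob_space] case_prod_beta')
  then show ?thesis by (rule measurable_bind_prob_space2[OF measurable_const[OF WD_space]])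
qed

lemma measurable_dsgd_step: "dsgd_step D WD gF \<gamma> \<in> borel \<rightarrow>\<^sub>M prob_algebra borel"
proof -
  have "PiM UNIV D \<in> space (prob_algebra (PiM UNIV D))"
    using D_prob by (auto simp: space_prob_algebra intro!: prob_space_PiM)
  then show ?thesis
    unfolding dsgd_step_local_update
    using measurable_mixing_kernel[OF measurable_local_update]
    by (intro measurable_bind_prob_space2[OF measurable_const]) (simp_all add: case_prod_beta')
qed

lemma dsgd_law_in_prob_algebra: "dsgd_law D WD gF \<gamma> x0 t \<in> space (prob_algebra borel)"
proof (induction t)
  case 0
  show ?case by (simp add: dsgd_law_def space_prob_algebra prob_space_return)
next
  case (Suc t)
  show ?case unfolding dsgd_law_Suc space_prob_algebra
    using prob_space_bind'[OF Suc measurable_dsgd_step] sets_bind'[OF Suc measurable_dsgd_step] by simp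
qed

lemma nn_integral_dsgd_step:
  assumes "g \<in> borel_measurable borel"
  shows "(\<integral>\<^sup>+Z. g Z \<partial>(dsgd_step D WD gF \<gamma> X))
    = (\<integral>\<^sup>+\<xi>. (\<integral>\<^sup>+W. g (mix W (local_update gF \<gamma> X \<xi>)) \<partial>WD) \<partial>PiM UNIV D)"
proof -
  have update: "local_update gF \<gamma> X \<in> borel_measurable (PiM UNIV D)"
    using measurable_compose[OF measurable_Pair1'[of X borel] measurable_local_update] by simp
  have "(\<integral>\<^sup>+Z. g Z \<partial>(dsgd_step D WD gF \<gamma> X))
      = (\<integral>\<^sup>+\<xi>. (\<integral>\<^sup>+Z. g Z \<partial>(WD \<bind> (\<lambda>W. return borel (mix W (local_update gF \<gamma> X \<xi>))))) \<partial>PiM UNIV D)"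
    unfolding dsgd_step_local_update using assms
    by (intro nn_integral_bind[OF _ measurable_prob_algebraD[OF measurable_mixing_kernel[OF update]]])
      simp
  also have "\<dots> = (\<integral>\<^sup>+\<xi>. (\<integral>\<^sup>+W. g (mix W (local_update gF \<gamma> X \<xi>)) \<partial>WD) \<partial>PiM UNIV D)"
  proof (intro nn_integral_cong)
    fix \<xi>
    have "(\<lambda>W. return borel (mix W (local_update gF \<gamma> X \<xi>))) \<in> WD \<rightarrow>\<^sub>M subprob_algebra borel"
      by (subst measurable_cong_sets[OF WD_sets refl]) measurable
    then show "(\<integral>\<^sup>+Z. g Z \<partial>(WD \<bind> (\<lambda>W. return borel (mix W (local_update gF \<gamma> X \<xi>)))))
        = (\<integral>\<^sup>+W. g (mix W (local_update gF \<gamma> X \<xi>)) \<partial>WD)"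
      using assms by (subst nn_integral_bind) (auto simp: nn_integral_return)
  qed
  finally show ?thesis .
qed

lemma nn_integral_consensus_mix_le:
  fixes Y :: "(real^'d)^'n"
  shows "(\<integral>\<^sup>+W. ennreal (consensus_sq (mix W Y)) \<partial>WD) \<le> ennreal ((1 - p) / real CARD('n) * dev_sq Y)"
proof -
  define S where "S W = (\<Sum>i\<in>UNIV. (norm (mix W Y $ i - avg Y))\<^sup>2)" for W
  have S_nonneg: "0 \<le> S W" for W unfolding S_def by (simp add: sum_nonneg)
  have "AE W in WD. ennreal (consensus_sq (mix W Y)) = ennreal (1 / real CARD('n)) * ennreal (S W)"
    using doubly_stochastic
  proof (rule AE_mp, intro AE_I2 impI)
    fix W :: "real^'n^'n" assume "doubly_stochastic W"
    then have "consensus_sq (mix W Y) = 1 / real CARD('n) * S W"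
      unfolding consensus_sq_def S_def by (simp add: avg_mix_doubly_stochastic norm_minus_commute)
    then show "ennreal (consensus_sq (mix W Y)) = ennreal (1 / real CARD('n)) * ennreal (S W)"
      using S_nonneg by (simp add: ennreal_mult[symmetric])
  qed
  then have "(\<integral>\<^sup>+W. ennreal (consensus_sq (mix W Y)) \<partial>WD) = (\<integral>\<^sup>+W. ennreal (1 / real CARD('n)) * ennreal (S W) \<partial>WD)"
    by (rule nn_integral_cong_AE)
  also have "\<dots> = ennreal (1 / real CARD('n)) * (\<integral>\<^sup>+W. ennreal (S W) \<partial>WD)"
    unfolding S_def by (rule nn_integral_cmult) (simp add: measurable_cong_sets[OF WD_sets refl])
  also have "\<dots> \<le> ennreal (1 / real CARD('n)) * ennreal ((1 - p) * dev_sq Y)"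
    using mixing[of Y] by (intro mult_left_mono) (auto simp: S_def)
  also have "\<dots> = ennreal ((1 - p) / real CARD('n) * dev_sq Y)"
    using p_range by (simp add: ennreal_mult[symmetric] dev_sq_def sum_nonneg)
  finally show ?thesis .
qed

lemma sum_variance_le:
  "(\<Sum>i\<in>UNIV. \<integral>\<^sup>+\<zeta>. ennreal ((norm (gF i (X $ i) \<zeta> - gf i (X $ i)))\<^sup>2) \<partial>D i) \<le> ennreal (real CARD('n) * \<sigma>\<^sup>2)"
    (is "?N \<le> _")
proof -
  have "ennreal (real CARD('n)) * ennreal (1 / real CARD('n)) = 1"
    by (simp add: ennreal_mult[symmetric])
  then have "?N = ennreal (real CARD('n)) * (ennreal (1 / real CARD('n)) * ?N)"
    by (simp add: mult.assoc[symmetric])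
  also have "\<dots> \<le> ennreal (real CARD('n)) * ennreal (\<sigma>\<^sup>2)"
    using variance[of X] by (rule mult_left_mono) simp
  finally show ?thesis by (simp add: ennreal_mult)
qed

lemma nn_integral_sum_noise:
  "(\<integral>\<^sup>+\<xi>. (\<Sum>i\<in>UNIV. ennreal ((norm (u i - \<gamma> *\<^sub>R (gF i (X $ i) (\<xi> i) - gf i (X $ i))))\<^sup>2)) \<partial>PiM UNIV D)
    = ennreal (\<Sum>i\<in>UNIV. (norm (u i))\<^sup>2)
      + ennreal (\<gamma>\<^sup>2) * (\<Sum>i\<in>UNIV. \<integral>\<^sup>+\<zeta>. ennreal ((norm (gF i (X $ i) \<zeta> - gf i (X $ i)))\<^sup>2) \<partial>D i)"
proof -
  define N where "N i = (\<integral>\<^sup>+\<zeta>. ennreal ((norm (gF i (X $ i) \<zeta> - gf i (X $ i)))\<^sup>2) \<partial>D i)" for i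
  define q where "q i \<zeta> = ennreal ((norm (u i - \<gamma> *\<^sub>R (gF i (X $ i) \<zeta> - gf i (X $ i))))\<^sup>2)" for i \<zeta>
  have q_meas: "q i \<in> borel_measurable (D i)" for i unfolding q_def by measurable
  have "N i \<le> (\<Sum>i\<in>UNIV. N i)" for i by (rule member_le_sum) auto
  also have "\<dots> < \<infinity>"
    using sum_variance_le[of X] unfolding N_def by (simp add: le_less_trans)
  finally have N_finite: "N i < \<infinity>" for i .
  have q_component: "(\<lambda>\<xi>. q i (\<xi> i)) \<in> borel_measurable (PiM UNIV D)" for i
    using measurable_compose[OF measurable_component_singleton[of i UNIV D] q_meas[of i]] by simp
  have "(\<integral>\<^sup>+\<xi>. (\<Sum>i\<in>UNIV. q i (\<xi> i)) \<partial>PiM UNIV D) = (\<Sum>i\<in>UNIV. \<integral>\<^sup>+\<xi>. q i (\<xi> i) \<partial>PiM UNIV D)"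
    using q_component by (intro nn_integral_sum) simp
  also have "\<dots> = (\<Sum>i\<in>UNIV. \<integral>\<^sup>+\<zeta>. q i \<zeta> \<partial>D i)"
  proof (intro sum.cong refl)
    fix i
    have "(\<integral>\<^sup>+\<zeta>. q i \<zeta> \<partial>D i) = (\<integral>\<^sup>+\<zeta>. q i \<zeta> \<partial>distr (PiM UNIV D) (D i) (\<lambda>\<xi>. \<xi> i))"
      by (simp add: distr_PiM_component D_prob)
    also have "\<dots> = (\<integral>\<^sup>+\<xi>. q i (\<xi> i) \<partial>PiM UNIV D)"
      using q_meas by (intro nn_integral_distr) (auto simp: distr_PiM_component D_prob)
    finally show "(\<integral>\<^sup>+\<xi>. q i (\<xi> i) \<partial>PiM UNIV D) = (\<integral>\<^sup>+\<zeta>. q i \<zeta> \<partial>D i)" by simp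
  qed
  also have "\<dots> = (\<Sum>i\<in>UNIV. ennreal ((norm (u i))\<^sup>2) + ennreal (\<gamma>\<^sup>2) * N i)"
    unfolding q_def N_def
    using D_prob unbiased N_finite[unfolded N_def]
    by (intro sum.cong refl nn_integral_power2_norm_diff_zero_mean) auto
  finally show ?thesis
    by (simp add: q_def N_def sum.distrib sum_distrib_left sum_nonneg)
qed

lemma nn_integral_consensus_dsgd_step_le_drift:
  "(\<integral>\<^sup>+Z. ennreal (consensus_sq Z) \<partial>(dsgd_step D WD gF \<gamma> X))
     \<le> ennreal ((1 - p) / real CARD('n) *
          ((\<Sum>i\<in>UNIV. (norm ((X $ i - avg X) - \<gamma> *\<^sub>R (gf i (X $ i) - mean (\<lambda>j. gf j (X $ j)))))\<^sup>2)
           + \<gamma>\<^sup>2 * (real CARD('n) * \<sigma>\<^sup>2)))"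
proof -
  define n where "n = real CARD('n)"
  have n: "0 < n" unfolding n_def by simp
  define u where "u i = (X $ i - avg X) - \<gamma> *\<^sub>R (gf i (X $ i) - mean (\<lambda>j. gf j (X $ j)))" for i
  define noise where "noise \<xi> i = \<gamma> *\<^sub>R (gF i (X $ i) (\<xi> i) - gf i (X $ i))" for \<xi> i
  define N where "N i = (\<integral>\<^sup>+\<zeta>. ennreal ((norm (gF i (X $ i) \<zeta> - gf i (X $ i)))\<^sup>2) \<partial>D i)" for i
  define U where "U = (\<Sum>i\<in>UNIV. (norm (u i))\<^sup>2)"
  have "(\<integral>\<^sup>+Z. ennreal (consensus_sq Z) \<partial>(dsgd_step D WD gF \<gamma> X))
      = (\<integral>\<^sup>+\<xi>. (\<integral>\<^sup>+W. ennreal (consensus_sq (mix W (local_update gF \<gamma> X \<xi>))) \<partial>WD) \<partial>PiM UNIV D)"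
    by (rule nn_integral_dsgd_step) measurable
  also have "\<dots> \<le> (\<integral>\<^sup>+\<xi>. ennreal ((1 - p) / n) * ennreal (\<Sum>i\<in>UNIV. (norm (u i - noise \<xi> i))\<^sup>2) \<partial>PiM UNIV D)"
  proof (intro nn_integral_mono)
    fix \<xi>
    have "(\<integral>\<^sup>+W. ennreal (consensus_sq (mix W (local_update gF \<gamma> X \<xi>))) \<partial>WD)
        \<le> ennreal ((1 - p) / n * dev_sq (local_update gF \<gamma> X \<xi>))"
      unfolding n_def by (rule nn_integral_consensus_mix_le)
    also have "\<dots> \<le> ennreal ((1 - p) / n * (\<Sum>i\<in>UNIV. (norm (u i - noise \<xi> i))\<^sup>2))"
      using dev_sq_local_update_le[of gF \<gamma> X \<xi> "\<lambda>i. gf i (X $ i)"] p_range n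
      by (intro ennreal_leI mult_left_mono) (auto simp: u_def noise_def)
    also have "\<dots> = ennreal ((1 - p) / n) * ennreal (\<Sum>i\<in>UNIV. (norm (u i - noise \<xi> i))\<^sup>2)"
      using p_range n by (intro ennreal_mult) (auto simp: sum_nonneg)
    finally show "(\<integral>\<^sup>+W. ennreal (consensus_sq (mix W (local_update gF \<gamma> X \<xi>))) \<partial>WD)
        \<le> ennreal ((1 - p) / n) * ennreal (\<Sum>i\<in>UNIV. (norm (u i - noise \<xi> i))\<^sup>2)" .
  qed
  also have "\<dots> = ennreal ((1 - p) / n) * (ennreal U + ennreal (\<gamma>\<^sup>2) * (\<Sum>i\<in>UNIV. N i))"
    using nn_integral_sum_noise[of u \<gamma> X]
    by (subst nn_integral_cmult) (simp_all add: noise_def N_def U_def)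
  also have "\<dots> \<le> ennreal ((1 - p) / n) * (ennreal U + ennreal (\<gamma>\<^sup>2) * ennreal (n * \<sigma>\<^sup>2))"
    using sum_variance_le[of X] by (intro mult_left_mono add_left_mono) (auto simp: N_def n_def)
  also have "ennreal U + ennreal (\<gamma>\<^sup>2) * ennreal (n * \<sigma>\<^sup>2) = ennreal (U + \<gamma>\<^sup>2 * (n * \<sigma>\<^sup>2))"
    using n by (simp add: U_def ennreal_mult sum_nonneg)
  also have "ennreal ((1 - p) / n) * \<dots> = ennreal ((1 - p) / n * (U + \<gamma>\<^sup>2 * (n * \<sigma>\<^sup>2)))"
    using p_range n by (intro ennreal_mult[symmetric]) (auto simp: U_def sum_nonneg)
  finally show ?thesis unfolding U_def u_def n_def .
qed

lemma nn_integral_consensus_dsgd_step_le: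
  "(\<integral>\<^sup>+Z. ennreal (consensus_sq Z) \<partial>(dsgd_step D WD gF \<gamma> X))
     \<le> ennreal ((1 - p / 2) * consensus_sq X + 3 * (1 - p) / p * \<gamma>\<^sup>2 * grad_sq gf X + (1 - p) * \<gamma>\<^sup>2 * \<sigma>\<^sup>2)"
proof -
  define n where "n = real CARD('n)"
  have n: "0 < n" unfolding n_def by simp
  define g where "g i = gf i (X $ i)" for i
  define A where "A = (\<Sum>i\<in>UNIV. (norm (X $ i - avg X))\<^sup>2)"
  define B where "B = (\<Sum>i\<in>UNIV. (norm (g i))\<^sup>2)"
  define U where "U = (\<Sum>i\<in>UNIV. (norm ((X $ i - avg X) - \<gamma> *\<^sub>R (g i - mean g)))\<^sup>2)"
  have A: "0 \<le> A" and B: "0 \<le> B" by (simp_all add: A_def B_def sum_nonneg)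
  have drift_le: "U \<le> (1 + p / 2) * A + (1 + 2 / p) * \<gamma>\<^sup>2 * B"
    using sum_power2_norm_centred_drift_le[of "p / 2" "vec_nth X" \<gamma> g] p_range
    by (simp add: U_def A_def B_def avg_eq_mean)
  have c\<^sub>A: "(1 - p) * (1 + p / 2) \<le> 1 - p / 2"
    using p_range by (simp add: algebra_simps)
  have "(1 - p) * (1 + 2 / p) = 3 * (1 - p) / p - (1 - p)\<^sup>2 / p"
    using p_range by (simp add: field_simps power2_eq_square)
  then have c\<^sub>B: "(1 - p) * (1 + 2 / p) \<le> 3 * (1 - p) / p"
    using p_range by (simp add: divide_nonneg_pos)
  have "(\<integral>\<^sup>+Z. ennreal (consensus_sq Z) \<partial>(dsgd_step D WD gF \<gamma> X))
      \<le> ennreal ((1 - p) / n * (U + \<gamma>\<^sup>2 * (n * \<sigma>\<^sup>2)))"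
    unfolding U_def g_def n_def by (rule nn_integral_consensus_dsgd_step_le_drift)
  also have "\<dots> \<le> ennreal ((1 - p) / n * ((1 + p / 2) * A + (1 + 2 / p) * \<gamma>\<^sup>2 * B + \<gamma>\<^sup>2 * (n * \<sigma>\<^sup>2)))"
    using drift_le p_range n by (intro ennreal_leI mult_left_mono) auto
  also have "\<dots> = ennreal (((1 - p) * (1 + p / 2)) * (A / n) + ((1 - p) * (1 + 2 / p)) * (\<gamma>\<^sup>2 * (B / n))
      + (1 - p) * \<gamma>\<^sup>2 * \<sigma>\<^sup>2)"
    using n by (intro arg_cong[where f = ennreal]) (simp add: field_simps)
  also have "\<dots> \<le> ennreal ((1 - p / 2) * (A / n) + (3 * (1 - p) / p) * (\<gamma>\<^sup>2 * (B / n)) + (1 - p) * \<gamma>\<^sup>2 * \<sigma>\<^sup>2)"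
    using c\<^sub>A c\<^sub>B A B n by (intro ennreal_leI add_mono mult_right_mono) auto
  also have "\<dots> = ennreal ((1 - p / 2) * consensus_sq X + 3 * (1 - p) / p * \<gamma>\<^sup>2 * grad_sq gf X
      + (1 - p) * \<gamma>\<^sup>2 * \<sigma>\<^sup>2)"
    by (simp add: consensus_sq_def grad_sq_def A_def B_def g_def n_def norm_minus_commute mult.assoc)
  finally show ?thesis .
qed

lemma nn_integral_consensus_dsgd_law_Suc_le:
  "(\<integral>\<^sup>+X. ennreal (consensus_sq X) \<partial>dsgd_law D WD gF \<gamma> x0 (Suc t))
    \<le> ennreal (1 - p / 2) * (\<integral>\<^sup>+X. ennreal (consensus_sq X) \<partial>dsgd_law D WD gF \<gamma> x0 t)
      + ennreal (3 * (1 - p) / p * \<gamma>\<^sup>2) * (\<integral>\<^sup>+X. ennreal (grad_sq gf X) \<partial>dsgd_law D WD gF \<gamma> x0 t)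
      + ennreal ((1 - p) * \<gamma>\<^sup>2 * \<sigma>\<^sup>2)"
proof -
  let ?L = "dsgd_law D WD gF \<gamma> x0 t"
  have L_sets: "sets ?L = sets borel" and L_prob: "prob_space ?L"
    using dsgd_law_in_prob_algebra[of \<gamma> x0 t] by (auto simp: space_prob_algebra)
  have [measurable]: "(\<lambda>X. ennreal (grad_sq gf X)) \<in> borel_measurable ?L"
    "(\<lambda>X. ennreal (consensus_sq X)) \<in> borel_measurable ?L"
    unfolding measurable_cong_sets[OF L_sets refl] grad_sq_def by measurable
  have step: "dsgd_step D WD gF \<gamma> \<in> ?L \<rightarrow>\<^sub>M subprob_algebra borel"
    using measurable_prob_algebraD[OF measurable_dsgd_step] by (subst measurable_cong_sets[OF L_sets refl])
  have "(\<integral>\<^sup>+X. ennreal (consensus_sq X) \<partial>dsgd_law D WD gF \<gamma> x0 (Suc t))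
      = (\<integral>\<^sup>+X. (\<integral>\<^sup>+Z. ennreal (consensus_sq Z) \<partial>(dsgd_step D WD gF \<gamma> X)) \<partial>?L)"
    unfolding dsgd_law_Suc by (rule nn_integral_bind[OF _ step]) measurable
  also have "\<dots> \<le> (\<integral>\<^sup>+X. ennreal (1 - p / 2) * ennreal (consensus_sq X)
      + ennreal (3 * (1 - p) / p * \<gamma>\<^sup>2) * ennreal (grad_sq gf X) + ennreal ((1 - p) * \<gamma>\<^sup>2 * \<sigma>\<^sup>2) \<partial>?L)"
  proof (intro nn_integral_mono)
    fix X :: "(real^'d)^'n"
    have "(\<integral>\<^sup>+Z. ennreal (consensus_sq Z) \<partial>(dsgd_step D WD gF \<gamma> X))
        \<le> ennreal ((1 - p / 2) * consensus_sq X + 3 * (1 - p) / p * \<gamma>\<^sup>2 * grad_sq gf X + (1 - p) * \<gamma>\<^sup>2 * \<sigma>\<^sup>2)"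
      by (rule nn_integral_consensus_dsgd_step_le)
    also have "\<dots> = ennreal (1 - p / 2) * ennreal (consensus_sq X)
          + ennreal (3 * (1 - p) / p * \<gamma>\<^sup>2) * ennreal (grad_sq gf X) + ennreal ((1 - p) * \<gamma>\<^sup>2 * \<sigma>\<^sup>2)"
      using p_range by (intro ennreal_affine_combination) (simp_all add: consensus_sq_def grad_sq_def sum_nonneg)
    finally show "(\<integral>\<^sup>+Z. ennreal (consensus_sq Z) \<partial>(dsgd_step D WD gF \<gamma> X))
        \<le> ennreal (1 - p / 2) * ennreal (consensus_sq X)
          + ennreal (3 * (1 - p) / p * \<gamma>\<^sup>2) * ennreal (grad_sq gf X) + ennreal ((1 - p) * \<gamma>\<^sup>2 * \<sigma>\<^sup>2)" .
  qed
  also have "\<dots> = ennreal (1 - p / 2) * (\<integral>\<^sup>+X. ennreal (consensus_sq X) \<partial>?L)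
      + ennreal (3 * (1 - p) / p * \<gamma>\<^sup>2) * (\<integral>\<^sup>+X. ennreal (grad_sq gf X) \<partial>?L)
      + ennreal ((1 - p) * \<gamma>\<^sup>2 * \<sigma>\<^sup>2)"
    using prob_space.emeasure_space_1[OF L_prob] by (simp add: nn_integral_add nn_integral_cmult)
  finally show ?thesis .
qed

end

subsection \<open>Unrolling the consensus recursion\<close>

lemma ennreal_recursion_le_fixpoint:
  fixes a b :: "nat \<Rightarrow> ennreal" and \<alpha> \<beta> C B K :: ennreal
  assumes a0: "a 0 = 0"
    and rec: "\<And>t. a (Suc t) \<le> \<alpha> * a t + \<beta> * b t + C"
    and b_le: "\<And>t. b t \<le> B"
    and fixpoint: "\<alpha> * K + \<beta> * B + C \<le> K"
  shows "a t \<le> K"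
proof (induction t)
  case 0
  show ?case using a0 by simp
next
  case (Suc t)
  have "a (Suc t) \<le> \<alpha> * a t + \<beta> * b t + C" by (rule rec)
  also have "\<dots> \<le> \<alpha> * K + \<beta> * B + C"
    using Suc b_le by (intro add_mono mult_left_mono) auto
  also note fixpoint
  finally show ?case .
qed

lemma ennreal_recursion_le_previous:
  fixes a b :: "nat \<Rightarrow> ennreal" and \<alpha> \<beta> C q K\<^sub>1 K\<^sub>2 :: ennreal
  assumes a0: "a 0 = 0"
    and rec: "\<And>t. a (Suc t) \<le> \<alpha> * a t + \<beta> * b t + C"
    and slow: "\<And>t. b t \<le> q * b (Suc t)"
    and "\<beta> \<le> K\<^sub>1" "C \<le> K\<^sub>2" "\<alpha> * K\<^sub>1 * q + \<beta> \<le> K\<^sub>1" "\<alpha> * K\<^sub>2 + C \<le> K\<^sub>2"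
  shows "a (Suc t) \<le> K\<^sub>1 * b t + K\<^sub>2"
proof (induction t)
  case 0
  have "a (Suc 0) \<le> \<beta> * b 0 + C" using rec[of 0] a0 by simp
  also have "\<dots> \<le> K\<^sub>1 * b 0 + K\<^sub>2" using assms by (intro add_mono mult_right_mono) auto
  finally show ?case .
next
  case (Suc t)
  have "a (Suc t) \<le> K\<^sub>1 * b t + K\<^sub>2" by (rule Suc)
  also have "\<dots> \<le> K\<^sub>1 * (q * b (Suc t)) + K\<^sub>2" by (intro add_right_mono mult_left_mono slow) simp
  finally have IH: "a (Suc t) \<le> K\<^sub>1 * (q * b (Suc t)) + K\<^sub>2" .
  have "a (Suc (Suc t)) \<le> \<alpha> * a (Suc t) + \<beta> * b (Suc t) + C" by (rule rec)
  also have "\<dots> \<le> \<alpha> * (K\<^sub>1 * (q * b (Suc t)) + K\<^sub>2) + \<beta> * b (Suc t) + C"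
    using IH by (intro add_right_mono mult_left_mono) simp_all
  also have "\<dots> = (\<alpha> * K\<^sub>1 * q + \<beta>) * b (Suc t) + (\<alpha> * K\<^sub>2 + C)"
    by (simp add: algebra_simps)
  also have "\<dots> \<le> K\<^sub>1 * b (Suc t) + K\<^sub>2" using assms by (intro add_mono mult_right_mono) auto
  finally show ?case .
qed

lemma consensus_recursion_bound_uniform:
  fixes a b :: "nat \<Rightarrow> ennreal" and p \<gamma> \<sigma> \<phi> :: real
  assumes p: "0 < p" "p \<le> 1" and a0: "a 0 = 0"
    and rec: "\<And>t. a (Suc t) \<le> ennreal (1 - p / 2) * a t + ennreal (3 * (1 - p) / p * \<gamma>\<^sup>2) * b t
                               + ennreal ((1 - p) * \<gamma>\<^sup>2 * \<sigma>\<^sup>2)"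
    and b_le: "\<And>t. b t \<le> ennreal (\<phi>\<^sup>2)"
  shows "a t \<le> ennreal (6 * (1 - p) * \<gamma>\<^sup>2 * (\<phi>\<^sup>2 / p\<^sup>2 + \<sigma>\<^sup>2 / p))"
proof (rule ennreal_recursion_le_fixpoint[OF a0 rec b_le])
  define \<beta> where "\<beta> = 3 * (1 - p) / p * \<gamma>\<^sup>2"
  define C where "C = (1 - p) * \<gamma>\<^sup>2 * \<sigma>\<^sup>2"
  define K where "K = 6 * (1 - p) * \<gamma>\<^sup>2 * (\<phi>\<^sup>2 / p\<^sup>2 + \<sigma>\<^sup>2 / p)"
  have nonneg: "0 \<le> 1 - p / 2" "0 \<le> \<beta>" "0 \<le> C" "0 \<le> K"
    using p by (simp_all add: \<beta>_def C_def K_def)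
  have "(1 - p / 2) * K + \<beta> * \<phi>\<^sup>2 + C = K - 2 * C"
    using p by (simp add: \<beta>_def C_def K_def field_simps power2_eq_square)
  then have "(1 - p / 2) * K + \<beta> * \<phi>\<^sup>2 + C \<le> K" using nonneg by linarith
  then have "ennreal ((1 - p / 2) * K + \<beta> * \<phi>\<^sup>2 + C) \<le> ennreal K" by (rule ennreal_leI)
  then have "ennreal (1 - p / 2) * ennreal K + ennreal \<beta> * ennreal (\<phi>\<^sup>2) + ennreal C \<le> ennreal K"
    using nonneg by (subst (asm) ennreal_affine_combination) simp_all
  then show "ennreal (1 - p / 2) * ennreal (6 * (1 - p) * \<gamma>\<^sup>2 * (\<phi>\<^sup>2 / p\<^sup>2 + \<sigma>\<^sup>2 / p))
      + ennreal (3 * (1 - p) / p * \<gamma>\<^sup>2) * ennreal (\<phi>\<^sup>2) + ennreal ((1 - p) * \<gamma>\<^sup>2 * \<sigma>\<^sup>2)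
      \<le> ennreal (6 * (1 - p) * \<gamma>\<^sup>2 * (\<phi>\<^sup>2 / p\<^sup>2 + \<sigma>\<^sup>2 / p))"
    unfolding \<beta>_def C_def K_def .
qed

lemma consensus_recursion_bound_slow_decay:
  fixes a b :: "nat \<Rightarrow> ennreal" and p \<gamma> \<sigma> :: real
  assumes p: "0 < p" "p \<le> 1" and a0: "a 0 = 0"
    and rec: "\<And>t. a (Suc t) \<le> ennreal (1 - p / 2) * a t + ennreal (3 * (1 - p) / p * \<gamma>\<^sup>2) * b t
                               + ennreal ((1 - p) * \<gamma>\<^sup>2 * \<sigma>\<^sup>2)"
    and slow: "\<And>t. b t \<le> ennreal (1 + p / 4) * b (Suc t)"
    and "1 \<le> t"
  shows "a t \<le> ennreal (12 * (1 - p) * \<gamma>\<^sup>2) * (b (t - 1) / ennreal (p\<^sup>2) + ennreal (\<sigma>\<^sup>2 / p))"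
proof -
  define \<beta> where "\<beta> = 3 * (1 - p) / p * \<gamma>\<^sup>2"
  define C where "C = (1 - p) * \<gamma>\<^sup>2 * \<sigma>\<^sup>2"
  define M where "M = 12 * (1 - p) * \<gamma>\<^sup>2"
  define K\<^sub>1 where "K\<^sub>1 = M / p\<^sup>2"
  define K\<^sub>2 where "K\<^sub>2 = M * (\<sigma>\<^sup>2 / p)"
  have nonneg: "0 \<le> 1 - p / 2" "0 \<le> 1 + p / 4" "0 \<le> \<beta>" "0 \<le> C" "0 \<le> M" "0 \<le> K\<^sub>1" "0 \<le> K\<^sub>2"
    using p by (simp_all add: \<beta>_def C_def M_def K\<^sub>1_def K\<^sub>2_def)
  have "\<beta> = K\<^sub>1 * (p / 4)" using p by (simp add: \<beta>_def K\<^sub>1_def M_def field_simps power2_eq_square)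
  also have "\<dots> \<le> K\<^sub>1 * 1" using p nonneg by (intro mult_left_mono) auto
  finally have \<beta>_le: "\<beta> \<le> K\<^sub>1" by simp
  have "C = K\<^sub>2 * (p / 12)" using p by (simp add: C_def K\<^sub>2_def M_def field_simps)
  also have "\<dots> \<le> K\<^sub>2 * 1" using p nonneg by (intro mult_left_mono) auto
  finally have C_le: "C \<le> K\<^sub>2" by simp
  have "(1 - p / 2) * K\<^sub>1 * (1 + p / 4) + \<beta> = K\<^sub>1 - M / 8"
    using p by (simp add: \<beta>_def K\<^sub>1_def M_def field_simps power2_eq_square)
  then have fix\<^sub>1: "(1 - p / 2) * K\<^sub>1 * (1 + p / 4) + \<beta> \<le> K\<^sub>1" using nonneg by linarith
  have "(1 - p / 2) * K\<^sub>2 + C = K\<^sub>2 - 5 * C"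
    using p by (simp add: C_def K\<^sub>2_def M_def field_simps)
  then have fix\<^sub>2: "(1 - p / 2) * K\<^sub>2 + C \<le> K\<^sub>2" using nonneg by linarith
  obtain s where t: "t = Suc s" using \<open>1 \<le> t\<close> by (cases t) auto
  have "a (Suc s) \<le> ennreal K\<^sub>1 * b s + ennreal K\<^sub>2"
  proof (rule ennreal_recursion_le_previous[OF a0 rec slow])
    show "ennreal (3 * (1 - p) / p * \<gamma>\<^sup>2) \<le> ennreal K\<^sub>1"
      using \<beta>_le unfolding \<beta>_def by (rule ennreal_leI)
    show "ennreal ((1 - p) * \<gamma>\<^sup>2 * \<sigma>\<^sup>2) \<le> ennreal K\<^sub>2"
      using C_le unfolding C_def by (rule ennreal_leI)
    have "ennreal (1 - p / 2) * ennreal K\<^sub>1 * ennreal (1 + p / 4) + ennreal \<beta>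
        = ennreal ((1 - p / 2) * K\<^sub>1 * (1 + p / 4) + \<beta>)"
      using nonneg by (simp add: ennreal_mult)
    also have "\<dots> \<le> ennreal K\<^sub>1" using fix\<^sub>1 by (rule ennreal_leI)
    finally show "ennreal (1 - p / 2) * ennreal K\<^sub>1 * ennreal (1 + p / 4)
        + ennreal (3 * (1 - p) / p * \<gamma>\<^sup>2) \<le> ennreal K\<^sub>1"
      unfolding \<beta>_def .
    have "ennreal (1 - p / 2) * ennreal K\<^sub>2 + ennreal C = ennreal ((1 - p / 2) * K\<^sub>2 + C)"
      using nonneg by (simp add: ennreal_mult)
    also have "\<dots> \<le> ennreal K\<^sub>2" using fix\<^sub>2 by (rule ennreal_leI)
    finally show "ennreal (1 - p / 2) * ennreal K\<^sub>2 + ennreal ((1 - p) * \<gamma>\<^sup>2 * \<sigma>\<^sup>2) \<le> ennreal K\<^sub>2"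
      unfolding C_def .
  qed
  also have "\<dots> = ennreal M * (b s / ennreal (p\<^sup>2) + ennreal (\<sigma>\<^sup>2 / p))"
  proof -
    have "ennreal K\<^sub>1 = ennreal M / ennreal (p\<^sup>2)"
      using p nonneg by (simp add: K\<^sub>1_def divide_ennreal)
    moreover have "ennreal K\<^sub>2 = ennreal M * ennreal (\<sigma>\<^sup>2 / p)"
      unfolding K\<^sub>2_def using nonneg(5) by (rule ennreal_mult')
    ultimately show ?thesis by (simp add: distrib_left ennreal_times_divide mult.commute)
  qed
  finally show ?thesis by (simp add: t M_def)
qed

theorem proposition2:
  fixes D :: "'n::finite \<Rightarrow> 'b measure"
    and WD :: "(real^'n^'n) measure"
    and F :: "'n \<Rightarrow> real^'d \<Rightarrow> 'b \<Rightarrow> real"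
    and gradF :: "'n \<Rightarrow> real^'d \<Rightarrow> 'b \<Rightarrow> real^'d"
    and f :: "'n \<Rightarrow> real^'d \<Rightarrow> real"
    and gradf :: "'n \<Rightarrow> real^'d \<Rightarrow> real^'d"
    and \<gamma> p \<sigma> :: real
    and x0 :: "real^'d"
    and a b :: "nat \<Rightarrow> ennreal"
  assumes D_prob: "\<And>i. prob_space (D i)"
    and F_int: "\<And>i x. integrable (D i) (F i x)"
    and f_def: "\<And>i x. f i x = (\<integral>\<xi>. F i x \<xi> \<partial>D i)"
    and F_grad: "\<And>i x \<xi>. \<xi> \<in> space (D i) \<Longrightarrow>
                    ((\<lambda>y. F i y \<xi>) has_derivative (\<lambda>h. gradF i x \<xi> \<bullet> h)) (at x)"
    and f_grad: "\<And>i x. (f i has_derivative (\<lambda>h. gradf i x \<bullet> h)) (at x)"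
    and gradF_meas: "\<And>i. (\<lambda>(x, \<xi>). gradF i x \<xi>) \<in> borel_measurable (borel \<Otimes>\<^sub>M D i)"
    and unbiased: "\<And>i x. integrable (D i) (gradF i x) \<and> (\<integral>\<xi>. gradF i x \<xi> \<partial>D i) = gradf i x"
    and WD_prob: "prob_space WD"
    and WD_sets: "sets WD = sets borel"
    and A1_ds: "AE W in WD. doubly_stochastic W"
    and p_range: "0 < p" "p \<le> 1"
    and A1_mix: "\<And>X :: (real^'d)^'n.
        (\<integral>\<^sup>+ W. ennreal (\<Sum>i\<in>UNIV. (norm (mix W X $ i - avg X))\<^sup>2) \<partial>WD)
          \<le> ennreal ((1 - p) * dev_sq X)"
    and A3: "\<And>X :: (real^'d)^'n.
        ennreal (1 / real CARD('n)) *
          (\<Sum>i\<in>UNIV. \<integral>\<^sup>+ \<xi>. ennreal ((norm (gradF i (X $ i) \<xi> - gradf i (X $ i)))\<^sup>2) \<partial>D i)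
          \<le> ennreal (\<sigma>\<^sup>2)"
    and \<gamma>_pos: "0 < \<gamma>"
    and a_def: "\<And>t. a t = (\<integral>\<^sup>+ X. ennreal (consensus_sq X) \<partial>dsgd_law D WD gradF \<gamma> x0 t)"
    and b_def: "\<And>t. b t = (\<integral>\<^sup>+ X. ennreal (grad_sq gradf X) \<partial>dsgd_law D WD gradF \<gamma> x0 t)"
  shows "(\<forall>\<phi>::real. 0 \<le> \<phi> \<longrightarrow> (\<forall>t. b t \<le> ennreal (\<phi>\<^sup>2)) \<longrightarrow>
            (\<forall>t. a t \<le> ennreal (6 * (1 - p) * \<gamma>\<^sup>2 * (\<phi>\<^sup>2 / p\<^sup>2 + \<sigma>\<^sup>2 / p))))
       \<and> ((\<forall>t. b t \<le> ennreal (1 + p / 4) * b (Suc t)) \<longrightarrow>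
            (\<forall>t\<ge>1. a t \<le> ennreal (12 * (1 - p) * \<gamma>\<^sup>2) *
                         (b (t - 1) / ennreal (p\<^sup>2) + ennreal (\<sigma>\<^sup>2 / p))))"
proof -
  \<comment> \<open>Of the hypotheses on the stochastic gradients only their unbiasedness is used: F, f and
    the differentiability assumptions merely explain where gradF and gradf come from, and the
    bounds hold for every step size, positive or not.\<close>
  interpret dsgd D WD gradF gradf p \<sigma>
    by (rule dsgd.intro) (fact D_prob gradF_meas unbiased WD_prob WD_sets A1_ds p_range A1_mix A3)+
  have a0: "a 0 = 0"
    unfolding a_def by (rule nn_integral_consensus_dsgd_law_0)
  have rec: "a (Suc t) \<le> ennreal (1 - p / 2) * a t + ennreal (3 * (1 - p) / p * \<gamma>\<^sup>2) * b t
                         + ennreal ((1 - p) * \<gamma>\<^sup>2 * \<sigma>\<^sup>2)" for t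
    unfolding a_def b_def by (rule nn_integral_consensus_dsgd_law_Suc_le)
  show ?thesis
    using consensus_recursion_bound_uniform[OF p_range a0 rec]
      consensus_recursion_bound_slow_decay[OF p_range a0 rec] by blast
qed

end
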